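(* Let $\mathcal H$ be an $n$-dimensional Hilbert space and $N\ge n$. Then: (i) $\epsilon^{(1)}=\frac{n}{N}$, and $\mathcal F^{(1)}=\{(F,G): (F,G)\text{ is an }(N,n)\text{ dual pair with } \|f_i\|\,\|g_i\|=\frac nN \text{ for all } 1\le i\le N\}$. (ii) If $F$ is a tight frame for $\mathcal H$ with $N$ elements, then $(F,S_F^{-1}F)\in\mathcal F^{(1)}$ if and only if $F$ is an equal norm frame.
   Context: $\mathcal H$ is a complex Hilbert space of finite dimension $n$, inner product linear in the first argument. A finite sequence $F=\{f_i\}_{i=1}^N$ in $\mathcal H$ is a frame if there are constants $0<A\le B$ with $A\|f\|^2\le\sum_{i=1}^N|\langle f,f_i\rangle|^2\le B\|f\|^2$ for all $f\in\mathcal H$; it is tight if one can take $A=B$, and equal norm if $\|f_i\|$ is independent of $i$. The frame operator is $S_F f=\sum_{i=1}^N\langle f,f_i\rangle f_i$ (invertible, positive), and the canonical dual is $S_F^{-1}F=\{S_F^{-1}f_i\}_{i=1}^N$. A sequence $G=\{g_i\}_{i=1}^N$ is a dual of the frame $F$ if $f=\sum_{i=1}^N\langle f,g_i\rangle f_i$ for all $f\in\mathcal H$; then $(F,G)$ is called an $(N,n)$ dual pair. For $1\le m\le N$, $\mathcal A_m$ is the set of $m$-element subsets $\Lambda\subseteq\{1,\dots,N\}$, and the error operator is $E_{\Lambda,F,G}f=\sum_{i\in\Lambda}\langle f,f_i\rangle g_i$. With $\|T\|_{\mathcal F}=\sqrt{\operatorname{tr}(T^*T)}$ the Frobenius norm,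 set $\epsilon^{(m)}_{F,G}=\max_{\Lambda\in\mathcal A_m}\|E_{\Lambda,F,G}\|_{\mathcal F}$; $\epsilon^{(1)}=\inf\{\epsilon^{(1)}_{F,G}: (F,G)\text{ an }(N,n)\text{ dual pair for }\mathcal H\}$; $\mathcal F^{(1)}=\{(F,G):\epsilon^{(1)}_{F,G}=\epsilon^{(1)}\}$; and for $m>1$, $\epsilon^{(m)}=\inf\{\epsilon^{(m)}_{F,G}:(F,G)\in\mathcal F^{(m-1)}\}$, $\mathcal F^{(m)}=\{(F,G)\in\mathcal F^{(m-1)}:\epsilon^{(m)}_{F,G}=\epsilon^{(m)}\}$. *)

theory Defs
  imports "HOL-Analysis.Analysis"
begin

text \<open>The n-dimensional complex Hilbert space is modelled as complex^'n (n = CARD('n)),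
  with the standard inner product, linear in the first argument. Frame vectors are
  indexed by 1..N.\<close>

definition cinner :: "complex^'n \<Rightarrow> complex^'n \<Rightarrow> complex" where
  "cinner x y = (\<Sum>i\<in>UNIV. x $ i * cnj (y $ i))"

definition is_frame :: "nat \<Rightarrow> (nat \<Rightarrow> complex^'n) \<Rightarrow> bool" where
  "is_frame N F \<longleftrightarrow> (\<exists>A B. 0 < A \<and> A \<le> B \<and>
     (\<forall>f. A * (norm f)^2 \<le> (\<Sum>i=1..N. (cmod (cinner f (F i)))^2)
        \<and> (\<Sum>i=1..N. (cmod (cinner f (F i)))^2) \<le> B * (norm f)^2))"

definition tight_frame :: "nat \<Rightarrow> (nat \<Rightarrow> complex^'n) \<Rightarrow> bool" where
  "tight_frame N F \<longleftrightarrow> (\<exists>A. 0 < A \<and>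
     (\<forall>f. (\<Sum>i=1..N. (cmod (cinner f (F i)))^2) = A * (norm f)^2))"

definition equal_norm :: "nat \<Rightarrow> (nat \<Rightarrow> complex^'n) \<Rightarrow> bool" where
  "equal_norm N F \<longleftrightarrow> (\<exists>c. \<forall>i\<in>{1..N}. norm (F i) = c)"

definition frame_op :: "nat \<Rightarrow> (nat \<Rightarrow> complex^'n) \<Rightarrow> complex^'n \<Rightarrow> complex^'n" where
  "frame_op N F f = (\<Sum>i=1..N. cinner f (F i) *s F i)"

definition canonical_dual :: "nat \<Rightarrow> (nat \<Rightarrow> complex^'n) \<Rightarrow> nat \<Rightarrow> complex^'n" where
  "canonical_dual N F i = inv (frame_op N F) (F i)"

definition dual_pair :: "nat \<Rightarrow> (nat \<Rightarrow> complex^'n) \<Rightarrow> (nat \<Rightarrow> complex^'n) \<Rightarrow> bool" where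
  "dual_pair N F G \<longleftrightarrow> is_frame N F \<and> (\<forall>f. f = (\<Sum>i=1..N. cinner f (G i) *s F i))"

definition error_op :: "nat set \<Rightarrow> (nat \<Rightarrow> complex^'n) \<Rightarrow> (nat \<Rightarrow> complex^'n) \<Rightarrow> complex^'n \<Rightarrow> complex^'n" where
  "error_op \<Lambda> F G f = (\<Sum>i\<in>\<Lambda>. cinner f (F i) *s G i)"

text \<open>Frobenius norm sqrt(tr(T*T)), computed with the standard orthonormal basis.\<close>
definition frob_norm :: "(complex^'n \<Rightarrow> complex^'n) \<Rightarrow> real" where
  "frob_norm T = sqrt (\<Sum>k\<in>UNIV. (norm (T (axis k 1)))^2)"

definition eps_m :: "nat \<Rightarrow> nat \<Rightarrow> (nat \<Rightarrow> complex^'n) \<Rightarrow> (nat \<Rightarrow> complex^'n) \<Rightarrow> real" where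
  "eps_m m N F G = Max {frob_norm (error_op \<Lambda> F G) | \<Lambda>. \<Lambda> \<subseteq> {1..N} \<and> card \<Lambda> = m}"

definition eps1 :: "('n::finite) itself \<Rightarrow> nat \<Rightarrow> real" where
  "eps1 _ N = Inf {eps_m 1 N F G | F G. dual_pair N (F :: nat \<Rightarrow> complex^'n) G}"

definition F1 :: "nat \<Rightarrow> ((nat \<Rightarrow> complex^('n::finite)) \<times> (nat \<Rightarrow> complex^'n)) set" where
  "F1 N = {(F, G). dual_pair N F G \<and> eps_m 1 N F G = eps1 TYPE('n) N}"

end

theory Submission
  imports Defs
begin

text \<open>Taking the trace of the reconstruction identity of a dual pair (F, G) gives
  n = \<Sum>i \<langle>f_i, g_i\<rangle> \<le> \<Sum>i \<parallel>f_i\<parallel> \<parallel>g_i\<parallel>, while the error operator of the single index i has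
  Frobenius norm \<parallel>f_i\<parallel> \<parallel>g_i\<parallel>. Hence \<epsilon>(1) \<ge> n/N, with equality iff every product
  \<parallel>f_i\<parallel> \<parallel>g_i\<parallel> equals n/N. The bound is attained by the harmonic frame
  f_i = N^(-1/2) (\<omega>^(i e(k)))_k, \<omega> = exp(2\<pi>i/N), for an injection e of the coordinates into
  {0..<N}: by orthogonality of the characters of \<int>/N it is a Parseval frame, hence its own dual,
  and all its vectors have norm (n/N)^(1/2). A tight frame with bound A has frame operator A\<cdot>I,
  so its canonical dual is F/A and the products are \<parallel>f_i\<parallel>^2/A; as they sum to n, they all
  equal n/N iff F is equal norm.\<close>

lemma norm_vec_power2: "(norm (x::complex^'n))^2 = (\<Sum>i\<in>UNIV. (cmod (x$i))^2)"
  unfolding norm_vec_def L2_set_def by (simp add: sum_nonneg)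

lemma cinner_self: "cinner x x = complex_of_real ((norm x)^2)"
  unfolding cinner_def norm_vec_power2 of_real_sum
  by (rule sum.cong) (simp_all add: complex_norm_square[symmetric])

lemma norm_cinner_le: "cmod (cinner x y) \<le> norm x * norm y"
proof -
  have "cmod (cinner x y) \<le> (\<Sum>i\<in>UNIV. cmod (x$i) * cmod (y$i))"
    unfolding cinner_def by (rule order_trans[OF norm_sum]) (simp add: norm_mult)
  also have "\<dots> \<le> L2_set (\<lambda>i. cmod (x$i)) UNIV * L2_set (\<lambda>i. cmod (y$i)) UNIV"
    using L2_set_mult_ineq[of "\<lambda>i. cmod (x$i)" "\<lambda>i. cmod (y$i)" UNIV] by simp
  finally show ?thesis by (simp add: norm_vec_def)
qed

lemma cinner_add_left: "cinner (x + y) z = cinner x z + cinner y z"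
  unfolding cinner_def by (simp add: distrib_right sum.distrib)

lemma cinner_add_right: "cinner x (y + z) = cinner x y + cinner x z"
  unfolding cinner_def by (simp add: distrib_left sum.distrib)

lemma cinner_scale_left: "cinner (c *s x) y = c * cinner x y"
  unfolding cinner_def by (simp add: sum_distrib_left mult.assoc)

lemma cinner_scale_right: "cinner x (c *s y) = cnj c * cinner x y"
  unfolding cinner_def by (simp add: sum_distrib_left mult.assoc mult.left_commute)

lemma cinner_sum_left: "finite A \<Longrightarrow> cinner (\<Sum>i\<in>A. f i) z = (\<Sum>i\<in>A. cinner (f i) z)"
  by (induct A rule: finite_induct) (simp_all add: cinner_add_left, simp add: cinner_def)

lemma cinner_commute: "cinner y x = cnj (cinner x y)"
  unfolding cinner_def by (simp add: mult.commute)

lemma cinner_axis: "cinner (axis k 1) y = cnj (y $ k)"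
  unfolding cinner_def axis_def by (simp add: if_distrib[where f="\<lambda>a. a * b" for b] cong: if_cong)

lemma norm_vector_smult: "norm (c *s (x::complex^'n)) = cmod c * norm x"
proof -
  have "(norm (c *s x))^2 = (cmod c * norm x)^2"
    unfolding norm_vec_power2 power_mult_distrib
    by (simp add: norm_mult power_mult_distrib sum_distrib_left)
  thus ?thesis by (simp add: power2_eq_iff_nonneg)
qed

lemma operator_eq_0_if_cinner_self_eq_0:
  fixes T :: "complex^'n \<Rightarrow> complex^'n"
  assumes add: "\<And>x y. T (x + y) = T x + T y"
    and scale: "\<And>c x. T (c *s x) = c *s T x"
    and quadratic: "\<And>x. cinner (T x) x = 0"
  shows "T x = 0"
proof -
  have re: "cinner (T x) y + cinner (T y) x = 0" for y
    using quadratic[of "x + y"] quadratic[of x] quadratic[of y]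
    by (simp add: add cinner_add_left cinner_add_right add.commute)
  have im: "- \<i> * cinner (T x) y + \<i> * cinner (T y) x = 0" for y
    using quadratic[of "x + \<i> *s y"] quadratic[of x] quadratic[of y]
    by (simp add: add scale cinner_add_left cinner_add_right cinner_scale_left cinner_scale_right)
  have "2 * \<i> * cinner (T x) (T x) = 0"
    using re[of "T x"] im[of "T x"] by (simp add: algebra_simps)
  thus ?thesis by (simp add: cinner_self)
qed

section \<open>Frame operators and dual pairs\<close>

lemma frame_op_add: "frame_op N F (x + y) = frame_op N F x + frame_op N F y"
  unfolding frame_op_def by (simp add: vec_eq_iff cinner_add_left distrib_right sum.distrib)

lemma frame_op_scale: "frame_op N F (c *s x) = c *s frame_op N F x"
  unfolding frame_op_def by (simp add: vec_eq_iff cinner_scale_left sum_distrib_left mult.assoc)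

lemma cinner_frame_op_self:
  "cinner (frame_op N F f) f = complex_of_real (\<Sum>i=1..N. (cmod (cinner f (F i)))^2)"
proof -
  have "cinner (frame_op N F f) f = (\<Sum>i=1..N. cinner f (F i) * cnj (cinner f (F i)))"
    unfolding frame_op_def
    by (simp add: cinner_sum_left cinner_scale_left cinner_commute[of f])
  also have "\<dots> = complex_of_real (\<Sum>i=1..N. (cmod (cinner f (F i)))^2)"
    unfolding of_real_sum by (rule sum.cong) (rule refl, rule complex_norm_square[symmetric])
  finally show ?thesis .
qed

lemma dual_pair_selfI:
  assumes Parseval: "\<And>f. frame_op N F f = f"
  shows "dual_pair N F F"
proof -
  have "(\<Sum>i=1..N. (cmod (cinner f (F i)))^2) = (norm f)^2" for f
    using cinner_frame_op_self[of N F f] by (simp only: Parseval cinner_self of_real_eq_iff)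
  then have "is_frame N F"
    unfolding is_frame_def by (intro exI[of _ 1]) simp
  with Parseval show ?thesis
    unfolding dual_pair_def frame_op_def by simp
qed

lemma frame_op_tight:
  assumes "\<And>f. (\<Sum>i=1..N. (cmod (cinner f (F i)))^2) = A * (norm f)^2"
  shows "frame_op N F f = complex_of_real A *s (f :: complex^'n)"
proof -
  define T where "T x = frame_op N F x - complex_of_real A *s x" for x
  have "T f = 0"
  proof (rule operator_eq_0_if_cinner_self_eq_0[where T=T])
    show "T (x + y) = T x + T y" for x y
      unfolding T_def frame_op_add by (simp add: vec_eq_iff algebra_simps)
    show "T (c *s x) = c *s T x" for c x
      unfolding T_def frame_op_scale by (simp add: vec_eq_iff algebra_simps)
    show "cinner (T x) x = 0" for x
    proof -
      have "cinner (frame_op N F x) x = cinner (complex_of_real A *s x) x"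
        unfolding cinner_frame_op_self assms by (simp add: cinner_scale_left cinner_self)
      thus ?thesis
        unfolding T_def by (simp add: cinner_def algebra_simps sum_subtractf)
    qed
  qed
  thus ?thesis unfolding T_def by simp
qed

lemma canonical_dual_tight_frame:
  assumes "tight_frame N (F :: nat \<Rightarrow> complex^'n)"
  obtains A where "A > 0" "\<And>i. canonical_dual N F i = complex_of_real (1/A) *s F i"
    "dual_pair N F (canonical_dual N F)"
proof -
  obtain A where A0: "A > 0"
    and A: "\<And>f. (\<Sum>i=1..N. (cmod (cinner f (F i)))^2) = A * (norm f)^2"
    using assms unfolding tight_frame_def by blast
  have S: "frame_op N F = (\<lambda>f. complex_of_real A *s f)"
    using frame_op_tight[OF A] by (rule ext)
  have "inj (frame_op N F)"
    unfolding S inj_def using A0 by (simp add: vec_eq_iff)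
  then have dual: "canonical_dual N F i = complex_of_real (1/A) *s F i" for i
    unfolding canonical_dual_def by (rule inv_f_eq) (use A0 in \<open>simp add: S vec_eq_iff\<close>)
  have "is_frame N F"
    unfolding is_frame_def using A0 A by (intro exI[of _ A]) simp
  moreover have "(\<Sum>i=1..N. cinner f (canonical_dual N F i) *s F i) = f" for f
  proof -
    have "(\<Sum>i=1..N. cinner f (canonical_dual N F i) *s F i)
        = complex_of_real (1/A) *s frame_op N F f"
      unfolding dual frame_op_def
      by (simp add: vec_eq_iff cinner_scale_right sum_distrib_left mult.assoc)
    also have "\<dots> = f" using A0 by (simp add: S vec_eq_iff)
    finally show ?thesis .
  qed
  ultimately show ?thesis
    using that[OF A0 dual] unfolding dual_pair_def by simp
qed

lemma dual_pair_trace: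
  assumes "dual_pair N F (G :: nat \<Rightarrow> complex^'n)"
  shows "(\<Sum>i=1..N. cinner (F i) (G i)) = of_nat CARD('n)"
proof -
  have "1 = (\<Sum>i=1..N. cnj (G i $ k) * F i $ k)" for k
  proof -
    have "axis k 1 $ k = (\<Sum>i=1..N. cinner (axis k 1) (G i) *s F i) $ k"
      using assms unfolding dual_pair_def by metis
    thus ?thesis by (simp add: cinner_axis)
  qed
  then have "(\<Sum>k\<in>UNIV. \<Sum>i=1..N. cnj (G i $ k) * F i $ k) = of_nat CARD('n)"
    by simp
  thus ?thesis
    unfolding cinner_def by (subst sum.swap) (simp add: mult.commute)
qed

lemma dual_pair_sum_norm_mult_ge:
  assumes "dual_pair N F (G :: nat \<Rightarrow> complex^'n)"
  shows "real CARD('n) \<le> (\<Sum>i=1..N. norm (F i) * norm (G i))"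
proof -
  have "real CARD('n) = cmod (\<Sum>i=1..N. cinner (F i) (G i))"
    using dual_pair_trace[OF assms] by simp
  also have "\<dots> \<le> (\<Sum>i=1..N. cmod (cinner (F i) (G i)))" by (rule norm_sum)
  also have "\<dots> \<le> (\<Sum>i=1..N. norm (F i) * norm (G i))" by (rule sum_mono) (rule norm_cinner_le)
  finally show ?thesis .
qed

section \<open>The harmonic frame\<close>

definition harmonic_frame :: "nat \<Rightarrow> ('n::finite \<Rightarrow> nat) \<Rightarrow> nat \<Rightarrow> complex^'n" where
  "harmonic_frame N e i =
     (\<chi> k. cis (2*pi*real i*real (e k)/real N) / complex_of_real (sqrt (real N)))"

lemma sum_cis_roots_of_unity:
  fixes d :: int
  assumes "d \<noteq> 0" "\<bar>d\<bar> < int N"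
  shows "(\<Sum>i=1..N. cis (2*pi*real i*real_of_int d/real N)) = 0"
proof -
  define z where "z = cis (2*pi*real_of_int d/real N)"
  have N0: "N > 0" using assms by linarith
  have power: "cis (2*pi*real i*real_of_int d/real N) = z^i" for i
    unfolding z_def by (subst Complex.DeMoivre) (simp add: field_simps)
  have "z^N = cis (real N * (2*pi*real_of_int d/real N))"
    unfolding z_def by (rule Complex.DeMoivre)
  also have "\<dots> = 1"
    using N0 by (simp add: cis_multiple_2pi)
  finally have zN: "z^N = 1" .
  have "z \<noteq> 1"
  proof
    assume "z = 1"
    then obtain m :: int where "2*pi*real_of_int d/real N = of_int (2*m) * pi"
      unfolding z_def cis_conv_exp exp_eq_1 by auto
    then have "d = m * int N"
      using N0 by (simp add: field_simps) (metis of_int_eq_iff of_int_mult of_int_of_nat_eq)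
    with assms show False
      by (cases "m = 0") (auto simp: abs_mult dest: mult_right_mono[of 1 "\<bar>m\<bar>" "int N"])
  qed
  have "(\<Sum>i=1..N. z^i) = z * (\<Sum>i<N. z^i)"
    by (induct N) (simp_all add: distrib_left)
  with \<open>z \<noteq> 1\<close> zN show ?thesis
    unfolding power by (simp add: geometric_sum)
qed

context
  fixes N :: nat and e :: "'n::finite \<Rightarrow> nat"
  assumes e_inj: "inj e" and e_less: "\<And>k. e k < N"
begin

lemma harmonic_frame_mult_cnj:
  "harmonic_frame N e i $ k * cnj (harmonic_frame N e i $ j)
     = cis (2*pi*real i*real_of_int (int (e k) - int (e j))/real N) / of_nat N"
proof -
  define s where "s = complex_of_real (sqrt (real N))"
  have N0: "N > 0" using e_less[of k] by simp
  have s: "s * cnj s = of_nat N" unfolding s_def by (simp flip: of_real_mult)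
  have arg: "2*pi*real i*real (e k)/real N + - (2*pi*real i*real (e j)/real N)
      = 2*pi*real i*real_of_int (int (e k) - int (e j))/real N"
    using N0 by (simp add: field_simps)
  have "harmonic_frame N e i $ k * cnj (harmonic_frame N e i $ j)
      = cis (2*pi*real i*real (e k)/real N) * cis (- (2*pi*real i*real (e j)/real N)) / (s * cnj s)"
    by (simp add: harmonic_frame_def s_def cis_cnj)
  also have "\<dots> = cis (2*pi*real i*real_of_int (int (e k) - int (e j))/real N) / of_nat N"
    unfolding cis_mult s arg ..
  finally show ?thesis .
qed

lemma harmonic_frame_orthogonality:
  "(\<Sum>i=1..N. harmonic_frame N e i $ k * cnj (harmonic_frame N e i $ j)) = (if k = j then 1 else 0)"
proof (cases "k = j")
  case True
  then show ?thesis using e_less[of k] by (simp add: harmonic_frame_mult_cnj)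
next
  case False
  then have "int (e k) - int (e j) \<noteq> 0" using e_inj by (auto dest: injD)
  moreover have "\<bar>int (e k) - int (e j)\<bar> < int N" using e_less[of k] e_less[of j] by linarith
  ultimately have "(\<Sum>i=1..N. cis (2*pi*real i*real_of_int (int (e k) - int (e j))/real N)) = 0"
    by (rule sum_cis_roots_of_unity)
  with False show ?thesis
    by (simp only: harmonic_frame_mult_cnj flip: sum_divide_distrib) simp
qed

lemma frame_op_harmonic_frame: "frame_op N (harmonic_frame N e) f = f"
proof -
  have "frame_op N (harmonic_frame N e) f $ k = f $ k" for k
  proof -
    have "frame_op N (harmonic_frame N e) f $ k
        = (\<Sum>j\<in>UNIV. f $ j * (\<Sum>i=1..N. harmonic_frame N e i $ k * cnj (harmonic_frame N e i $ j)))"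
      unfolding frame_op_def cinner_def
      by (simp add: sum_distrib_left sum_distrib_right mult_ac) (rule sum.swap)
    also have "\<dots> = (\<Sum>j\<in>UNIV. if k = j then f $ j else 0)"
      unfolding harmonic_frame_orthogonality by (rule sum.cong) auto
    also have "\<dots> = f $ k" by simp
    finally show ?thesis .
  qed
  thus ?thesis by (simp add: vec_eq_iff)
qed

lemma norm_harmonic_frame_power2: "(norm (harmonic_frame N e i))^2 = real CARD('n) / real N"
proof -
  have "complex_of_real ((cmod (harmonic_frame N e i $ k))^2) = 1 / of_nat N" for k
    unfolding complex_norm_square harmonic_frame_mult_cnj using e_less[of k] by simp
  then have "(cmod (harmonic_frame N e i $ k))^2 = 1 / real N" for k
    by (metis of_real_1 of_real_divide of_real_eq_iff of_real_of_nat_eq)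
  thus ?thesis by (simp add: norm_vec_power2)
qed

end

lemma exists_dual_pair_balanced:
  assumes "CARD('n) \<le> N"
  shows "\<exists>F G. dual_pair N F (G :: nat \<Rightarrow> complex^'n) \<and>
     (\<forall>i. norm (F i) * norm (G i) = real CARD('n) / real N)"
proof -
  obtain e :: "'n \<Rightarrow> nat" where e: "bij_betw e UNIV {0..<CARD('n)}"
    using ex_bij_betw_finite_nat[of "UNIV :: 'n set"] by auto
  then have "e k < CARD('n)" for k
    by (auto simp: bij_betw_def)
  then have "inj e" "\<And>k. e k < N"
    using e assms by (auto simp: bij_betw_def intro: order.strict_trans2)
  then show ?thesis
    using dual_pair_selfI[OF frame_op_harmonic_frame] norm_harmonic_frame_power2
    by (metis power2_eq_square)
qed

section \<open>The first optimal error\<close>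

lemma frob_norm_error_op_singleton:
  "frob_norm (error_op {i} F G) = norm (F i) * norm (G i :: complex^'n)"
proof -
  have "(\<Sum>k\<in>UNIV. (norm (error_op {i} F G (axis k 1)))^2) = (norm (F i) * norm (G i))^2"
    unfolding error_op_def
    by (simp add: cinner_axis norm_vector_smult power_mult_distrib norm_vec_power2[of "F i"]
        sum_distrib_right)
  thus ?thesis unfolding frob_norm_def by simp
qed

lemma eps_m_1:
  "eps_m 1 N F G = Max ((\<lambda>i. norm (F i) * norm (G i :: complex^'n)) ` {1..N})"
proof -
  have "{frob_norm (error_op \<Lambda> F G) | \<Lambda>. \<Lambda> \<subseteq> {1..N} \<and> card \<Lambda> = 1}
        = (\<lambda>i. norm (F i) * norm (G i)) ` {1..N}" (is "?L = ?R")
  proof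
    show "?L \<subseteq> ?R"
      by (auto simp: card_1_singleton_iff frob_norm_error_op_singleton)
    show "?R \<subseteq> ?L"
    proof
      fix x assume "x \<in> ?R"
      then obtain i where "i \<in> {1..N}" "x = norm (F i) * norm (G i)" by blast
      then show "x \<in> ?L"
        by (intro CollectI exI[of _ "{i}"]) (simp add: frob_norm_error_op_singleton)
    qed
  qed
  thus ?thesis unfolding eps_m_def by simp
qed

lemma Max_image_ge_average:
  fixes a :: "'a \<Rightarrow> real"
  assumes "finite I" "I \<noteq> {}" "real (card I) * r \<le> (\<Sum>i\<in>I. a i)"
  shows "r \<le> Max (a ` I)"
proof -
  have "(\<Sum>i\<in>I. a i) \<le> (\<Sum>i\<in>I. Max (a ` I))"
    using assms(1) by (intro sum_mono) simp
  with assms(3) have "real (card I) * r \<le> real (card I) * Max (a ` I)" by simp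
  moreover have "card I > 0" using assms(1,2) by (simp add: card_gt_0_iff)
  ultimately show ?thesis by simp
qed

lemma Max_image_eq_average_iff:
  fixes a :: "'a \<Rightarrow> real"
  assumes "finite I" "I \<noteq> {}" "real (card I) * r \<le> (\<Sum>i\<in>I. a i)"
  shows "Max (a ` I) = r \<longleftrightarrow> (\<forall>i\<in>I. a i = r)"
proof
  assume Max: "Max (a ` I) = r"
  then have le: "a i \<le> r" if "i \<in> I" for i
    using assms(1) that by auto
  show "\<forall>i\<in>I. a i = r"
  proof (rule ccontr)
    assume "\<not> (\<forall>i\<in>I. a i = r)"
    with le have "\<exists>i\<in>I. a i < r" by force
    then have "(\<Sum>i\<in>I. a i) < (\<Sum>i\<in>I. r)"
      using assms(1) le by (intro sum_strict_mono_ex1) auto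
    with assms(3) show False by simp
  qed
next
  assume "\<forall>i\<in>I. a i = r"
  then have "a ` I = {r}" using assms(2) by force
  thus "Max (a ` I) = r" by simp
qed

lemma eps_m_1_dual_pair_ge:
  assumes "dual_pair N F (G :: nat \<Rightarrow> complex^'n)" "N > 0"
  shows "real CARD('n) / real N \<le> eps_m 1 N F G"
  unfolding eps_m_1
  using assms dual_pair_sum_norm_mult_ge[OF assms(1)]
  by (intro Max_image_ge_average) simp_all

lemma eps_m_1_dual_pair_eq_iff:
  assumes "dual_pair N F (G :: nat \<Rightarrow> complex^'n)" "N > 0"
  shows "eps_m 1 N F G = real CARD('n) / real N
    \<longleftrightarrow> (\<forall>i\<in>{1..N}. norm (F i) * norm (G i) = real CARD('n) / real N)"
  unfolding eps_m_1
  using assms dual_pair_sum_norm_mult_ge[OF assms(1)]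
  by (intro Max_image_eq_average_iff) simp_all

lemma eps1_eq:
  assumes "CARD('n) \<le> N"
  shows "eps1 TYPE('n::finite) N = real CARD('n) / real N"
proof -
  have N0: "N > 0" using assms by (metis zero_less_card_finite order.strict_trans2)
  obtain F G where "dual_pair N F (G :: nat \<Rightarrow> complex^'n)"
    and "\<forall>i. norm (F i) * norm (G i) = real CARD('n) / real N"
    using exists_dual_pair_balanced[OF assms] by blast
  then have "real CARD('n) / real N \<in> {eps_m 1 N F G | F G. dual_pair N (F :: nat \<Rightarrow> complex^'n) G}"
    using eps_m_1_dual_pair_eq_iff[OF _ N0] by force
  thus ?thesis
    unfolding eps1_def using eps_m_1_dual_pair_ge[OF _ N0] by (auto intro: cInf_eq_minimum)
qed

lemma F1_eq:
  assumes "CARD('n) \<le> N"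
  shows "F1 N = {(F :: nat \<Rightarrow> complex^'n, G). dual_pair N F G \<and>
    (\<forall>i\<in>{1..N}. norm (F i) * norm (G i) = real CARD('n) / real N)}"
proof -
  have "N > 0" using assms by (metis zero_less_card_finite order.strict_trans2)
  thus ?thesis
    unfolding F1_def eps1_eq[OF assms] using eps_m_1_dual_pair_eq_iff by blast
qed

section \<open>Tight frames\<close>

lemma constant_on_iff_eq_average:
  fixes a :: "'a \<Rightarrow> real"
  assumes "finite I" "I \<noteq> {}" "(\<Sum>i\<in>I. a i) = real (card I) * r"
  shows "(\<exists>c. \<forall>i\<in>I. a i = c) \<longleftrightarrow> (\<forall>i\<in>I. a i = r)"
proof
  assume "\<exists>c. \<forall>i\<in>I. a i = c"
  then obtain c where "\<forall>i\<in>I. a i = c" by blast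
  moreover have "real (card I) * c = real (card I) * r"
    using assms calculation by simp
  ultimately show "\<forall>i\<in>I. a i = r" using assms(1,2) by simp
qed blast

lemma canonical_dual_in_F1_iff_equal_norm:
  assumes "CARD('n) \<le> N" "tight_frame N (F :: nat \<Rightarrow> complex^'n)"
  shows "(F, canonical_dual N F) \<in> F1 N \<longleftrightarrow> equal_norm N F"
proof -
  have N0: "N > 0" using assms by (metis zero_less_card_finite order.strict_trans2)
  obtain A where A0: "A > 0" and dual: "\<And>i. canonical_dual N F i = complex_of_real (1/A) *s F i"
    and dp: "dual_pair N F (canonical_dual N F)"
    using canonical_dual_tight_frame[OF assms(2)] by blast
  have products: "norm (F i) * norm (canonical_dual N F i) = (norm (F i))^2 / A" for i
    using A0 by (simp add: dual norm_vector_smult power2_eq_square norm_divide)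
  have "complex_of_real (\<Sum>i=1..N. (norm (F i))^2 / A)
      = (\<Sum>i=1..N. cinner (F i) (canonical_dual N F i))"
    unfolding of_real_sum by (rule sum.cong) (simp_all add: dual cinner_scale_right cinner_self)
  also have "\<dots> = of_nat CARD('n)" by (rule dual_pair_trace[OF dp])
  finally have "(\<Sum>i=1..N. (norm (F i))^2 / A) = real CARD('n)"
    by (metis of_real_eq_iff of_real_of_nat_eq)
  then have "(\<Sum>i=1..N. (norm (F i))^2 / A) = real N * (real CARD('n) / real N)"
    using N0 by simp
  then have "(\<exists>c. \<forall>i\<in>{1..N}. (norm (F i))^2 / A = c)
      \<longleftrightarrow> (\<forall>i\<in>{1..N}. (norm (F i))^2 / A = real CARD('n) / real N)"
    using N0 by (intro constant_on_iff_eq_average) simp_all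
  moreover have "equal_norm N F \<longleftrightarrow> (\<exists>c. \<forall>i\<in>{1..N}. (norm (F i))^2 / A = c)"
    unfolding equal_norm_def using A0
    by (metis (no_types, opaque_lifting) divide_cancel_right less_irrefl norm_ge_zero
        power2_eq_iff_nonneg real_sqrt_unique)
  ultimately show ?thesis
    unfolding F1_eq[OF assms(1)] using dp products by simp
qed

theorem theorem3p1:
  fixes N :: nat
  assumes "N \<ge> CARD('n)"
  shows "eps1 TYPE('n) N = real CARD('n) / real N
    \<and> F1 N = {(F :: nat \<Rightarrow> complex^'n, G). dual_pair N F G \<and>
         (\<forall>i\<in>{1..N}. norm (F i) * norm (G i) = real CARD('n) / real N)}
    \<and> (\<forall>F :: nat \<Rightarrow> complex^'n. tight_frame N F \<longrightarrow>
         ((F, canonical_dual N F) \<in> F1 N \<longleftrightarrow> equal_norm N F))"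
  using eps1_eq[OF assms] F1_eq[OF assms] canonical_dual_in_F1_iff_equal_norm[OF assms]
  by blast

end
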